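(* Let $a_1,a_2$ be nonzero integers, $\alpha,\beta$ the roots of $X^2-a_1X-a_2$, $\gamma:=\alpha/\beta$ assumed not a root of unity, $\Delta:=a_1^2+4a_2$ assumed not a square, $\Delta_0$ its squarefree part, $K:=\mathbb{Q}(\sqrt\Delta)$, and $h$ the greatest positive integer such that $\gamma$ is an $h$th power in $K$. Let $d$ be an odd positive integer with $3\nmid d$ whenever $\Delta_0=-3$. Then \[ \sum_{v\mid d^\infty}\sum_{a\mid d}\mu(a)\,\delta_{U,dv,av}=\delta_U(d), \] where \[ \delta_U(d):=\frac1d\left(\frac{1}{(d^\infty,h)}+\eta_U(d)\right)\prod_{p\mid d}\left(1-\frac1{p^2}\right)^{-1}, \] with $\eta_U(d):=0$ if $\Delta>0$ or $\Delta_0\not\equiv1\pmod4$ or $\Delta_0\nmid d^\infty$, and $\eta_U(d):=\frac{(d^\infty,h)}{[(d^\infty,h),\,\Delta_0/(d,\Delta_0)]^2}$ otherwise.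
   Context: For positive integers $m\mid n$: $\delta_{U,n,m}:=\frac{(m,h)}{\varphi(n)m}$ if $\Delta>0$ or $\Delta_0\not\equiv1\pmod4$ or $\Delta_0\nmid n$, and $\delta_{U,n,m}:=\frac{2(m,h)}{\varphi(n)m}$ otherwise. $d^\infty=\prod_{p\mid d}p^\infty$: the sum over $v\mid d^\infty$ runs over positive integers all of whose prime factors divide $d$; $(d^\infty,h)$ is the largest divisor of $h$ composed of primes dividing $d$; $\Delta_0\mid d^\infty$ means every prime factor of $\Delta_0$ divides $d$; $[\cdot,\cdot]$ denotes lcm; $\mu$ is the Möbius function. *)

theory Defs
  imports "HOL-Analysis.Analysis" "HOL-Number_Theory.Number_Theory" "HOL-Computational_Algebra.Squarefree"
begin

definition moebius_mu :: "nat \<Rightarrow> int" where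
  "moebius_mu n = (if n > 0 \<and> squarefree n then (-1) ^ card (prime_factors n) else 0)"

definition quad_field :: "int \<Rightarrow> complex set" where
  "quad_field D = {of_rat r + of_rat s * csqrt (of_int D) | r s. True}"

definition dinf_gcd :: "nat \<Rightarrow> nat \<Rightarrow> nat" where
  "dinf_gcd d h = (GREATEST g. g dvd h \<and> (\<forall>p. prime p \<and> p dvd g \<longrightarrow> p dvd d))"

definition deltaU :: "int \<Rightarrow> int \<Rightarrow> nat \<Rightarrow> nat \<Rightarrow> nat \<Rightarrow> real" where
  "deltaU D D0 h n m =
     (if D > 0 \<or> D0 mod 4 \<noteq> 1 \<or> \<not> D0 dvd int n
      then real (gcd m h) / (real (totient n) * real m)
      else 2 * real (gcd m h) / (real (totient n) * real m))"

definition etaU :: "int \<Rightarrow> int \<Rightarrow> nat \<Rightarrow> nat \<Rightarrow> real" where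
  "etaU D D0 h d =
     (if D > 0 \<or> D0 mod 4 \<noteq> 1 \<or> \<not> (\<forall>p::nat. prime p \<and> int p dvd D0 \<longrightarrow> p dvd d)
      then 0
      else real (dinf_gcd d h) /
           (of_int (lcm (int (dinf_gcd d h)) (D0 div gcd (int d) D0))) ^ 2)"

definition deltaU_d :: "int \<Rightarrow> int \<Rightarrow> nat \<Rightarrow> nat \<Rightarrow> real" where
  "deltaU_d D D0 h d =
     (1 / real d) * (1 / real (dinf_gcd d h) + etaU D D0 h d) *
     (\<Prod>p\<in>prime_factors d. inverse (1 - 1 / (real p)^2))"

end

theory Submission
  imports Defs
begin

text \<open>
  Write P for the set of primes dividing d. For a P-smooth v, both the totient of d v and the ratio
  gcd(a v, h) / (a v) factor over P, so Moebius inversion over the squarefree divisors a of d turns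
  the inner sum into a product of local differences, and the sum over v becomes an Euler product.
  If p^e and p^k are the exact powers of p dividing d and h, the factor at p is
  sum_{j >= k} p^(k - e - 2 j) = p^(-e - k) / (1 - p^-2).
  The case distinction in delta_{U,n,m} only contributes a constant factor: for squarefree Delta0
  and P-smooth v, Delta0 divides d v iff every prime factor of Delta0 divides d, and in that case
  eta_U(d) = 1 / (d^oo, h).

  The Euler product needs h > 0, i.e. gamma = alpha / beta is an n-th power in K only for boundedly
  many n. If x^n = gamma with x in K, the conjugate x' satisfies x'^n = 1 / gamma, so x x' = 1 or -1.
  If the trace x + x' has denominator q > 1, then q^n divides the denominator of gamma + 1 / gamma:
  the Lucas sequence of q x and q x' is integral and congruent mod q to a power of the numerator.
  Otherwise x^2 is a unit with integral trace; a trace of absolute value at most 2 would make gamma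
  a root of unity, so the trace is at least 3 in absolute value and one of |gamma|^2, |gamma|^-2 is
  at least (3/2)^n.
\<close>

section \<open>Lucas sequences and denominators\<close>

fun lucas_V :: "int \<Rightarrow> int \<Rightarrow> nat \<Rightarrow> int" where
  "lucas_V P Q 0 = 2"
| "lucas_V P Q (Suc 0) = P"
| "lucas_V P Q (Suc (Suc k)) = P * lucas_V P Q (Suc k) - Q * lucas_V P Q k"

lemma lucas_V_eq_power_sum:
  fixes x x' :: "'a :: comm_ring_1"
  assumes sum: "x + x' = of_int P" and prod: "x * x' = of_int Q"
  shows "of_int (lucas_V P Q k) = x ^ k + x' ^ k"
proof (induction k rule: induct_nat_012)
  case (ge2 k)
  have "x ^ Suc (Suc k) + x' ^ Suc (Suc k) =
        (x + x') * (x ^ Suc k + x' ^ Suc k) - (x * x') * (x ^ k + x' ^ k)"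
    by (simp add: algebra_simps)
  then show ?case using ge2 by (simp add: sum prod)
qed (simp_all add: sum)

lemma lucas_V_cong_power:
  assumes "m dvd Q"
  shows "[lucas_V P Q (Suc k) = P ^ Suc k] (mod m)"
proof (induction k)
  case (Suc k)
  have "[P * lucas_V P Q (Suc k) - Q * lucas_V P Q k = P * P ^ Suc k - 0] (mod m)"
    using assms by (intro cong_diff cong_mult cong_refl Suc) (simp add: cong_0_iff)
  then show ?case by simp
qed simp

lemma power_sum_denominator_dvd:
  fixes x x' :: "'a :: field_char_0"
  assumes sum: "x + x' = of_rat t" and prod: "x * x' = of_int N"
    and power_sum: "x ^ n + x' ^ n = of_rat c" and "n > 0"
  shows "snd (quotient_of t) ^ n dvd snd (quotient_of c)"
proof -
  obtain p q where t: "quotient_of t = (p, q)" by (cases "quotient_of t")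
  obtain c1 c2 where c: "quotient_of c = (c1, c2)" by (cases "quotient_of c")
  have "q > 0" "c2 > 0" using t c by (simp_all add: quotient_of_denom_pos)
  define V where "V = lucas_V p (N * q^2) n"
  have "of_int q * x + of_int q * x' = of_int p" and "(of_int q * x) * (of_int q * x') = of_int (N * q^2)"
    using sum prod quotient_of_div[OF t] \<open>q > 0\<close> by (simp_all add: of_rat_divide field_simps power2_eq_square)
  then have "of_int V = (of_int q * x) ^ n + (of_int q * x') ^ n"
    unfolding V_def by (rule lucas_V_eq_power_sum)
  also have "\<dots> = of_int q ^ n * (x ^ n + x' ^ n)"
    by (simp add: power_mult_distrib algebra_simps)
  also have "\<dots> = of_int q ^ n * (of_int c1 / of_int c2)"
    using power_sum quotient_of_div[OF c] by (simp add: of_rat_divide)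
  finally have "(of_int (V * c2) :: 'a) = of_int (q ^ n * c1)"
    using \<open>c2 > 0\<close> by (simp add: field_simps)
  then have "V * c2 = q ^ n * c1"
    by (simp only: of_int_eq_iff)
  obtain k where "n = Suc k" using \<open>n > 0\<close> by (cases n) auto
  then have "[V = p ^ n] (mod q)" unfolding V_def using lucas_V_cong_power[of q "N * q^2" p k] by simp
  then have "coprime (q ^ n) V"
    using quotient_of_coprime[OF t] by (metis cong_imp_coprime cong_sym coprime_power_left_iff coprime_commute)
  moreover have "q ^ n dvd V * c2" using \<open>V * c2 = q ^ n * c1\<close> by simp
  ultimately show ?thesis
    using t c by (simp add: coprime_dvd_mult_right_iff)
qed

section \<open>Roots of a non-root of unity in a quadratic field\<close>

lemma power_12_eq_1_if_trace_small:
  fixes y y' :: "'a :: field"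
  assumes prod: "y * y' = 1" and sum: "y + y' = of_int s" and small: "\<bar>s\<bar> \<le> 2"
  shows "y ^ 12 = 1"
proof -
  have yy: "y * y = of_int s * y - 1"
    using prod sum by (simp add: eq_diff_eq' algebra_simps flip: sum)
  have cube: "y ^ 3 = y * (y * y)" by (simp add: power3_eq_cube)
  from small consider "s = -2" | "s = -1" | "s = 0" | "s = 1" | "s = 2" by linarith
  then show ?thesis
  proof cases
    case 1
    have "(y + 1) * (y + 1) = y * y + 2 * y + 1" by (simp add: algebra_simps mult_2)
    also have "\<dots> = 0" using yy 1 by simp
    finally have "(y + 1) * (y + 1) = 0" .
    then show ?thesis by (simp add: add_eq_0_iff2)
  next
    case 2
    then have h: "y * y = - y - 1" using yy by simp
    have "y ^ 3 = y * (- y - 1)" unfolding cube h ..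
    also have "\<dots> = - (y * y) - y" by (simp add: algebra_simps)
    also have "\<dots> = 1" unfolding h by simp
    finally have "y ^ 3 = 1" .
    then show ?thesis using power_mult[of y 3 4] by simp
  next
    case 3
    then have "y ^ 2 = -1" using yy by (simp add: power2_eq_square)
    then show ?thesis using power_mult[of y 2 6] by simp
  next
    case 4
    then have h: "y * y = y - 1" using yy by simp
    have "y ^ 3 = y * (y - 1)" unfolding cube h ..
    also have "\<dots> = y * y - y" by (simp add: algebra_simps)
    also have "\<dots> = -1" unfolding h by simp
    finally have "y ^ 3 = -1" .
    then show ?thesis using power_mult[of y 3 4] by simp
  next
    case 5
    have "(y - 1) * (y - 1) = y * y - 2 * y + 1" by (simp add: algebra_simps mult_2)
    also have "\<dots> = 0" using yy 5 by simp
    finally have "(y - 1) * (y - 1) = 0" .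
    then show ?thesis by simp
  qed
qed

lemma unit_power_exponent_bound:
  fixes x x' \<gamma> :: complex
  assumes unit: "x * x' = 1 \<or> x * x' = -1" and sum: "x + x' = of_int p"
    and pow: "x ^ n = \<gamma>" "x' ^ n = inverse \<gamma>" and not_root: "\<forall>k>0. \<gamma> ^ k \<noteq> 1"
  shows "real n \<le> 2 * (norm \<gamma> ^ 2 + norm (inverse \<gamma>) ^ 2)"
proof -
  define B :: real where "B = (3/2) ^ n"
  have prod2: "x^2 * x'^2 = 1"
    using unit by (auto simp flip: power_mult_distrib)
  have "x^2 + x'^2 = (x + x')^2 - 2 * (x * x')" by (simp add: power2_eq_square algebra_simps)
  then have "x^2 + x'^2 = of_int (p^2 - 2) \<or> x^2 + x'^2 = of_int (p^2 + 2)"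
    using unit by (auto simp: sum)
  then obtain s where sum2: "x^2 + x'^2 = of_int s" by blast
  have "\<bar>s\<bar> > 2"
  proof (rule ccontr)
    assume "\<not> \<bar>s\<bar> > 2"
    then have "(x^2) ^ 12 = 1" using power_12_eq_1_if_trace_small[OF prod2 sum2] by simp
    moreover have "\<gamma> ^ 24 = ((x^2) ^ 12) ^ n" unfolding pow(1)[symmetric]
      by (simp add: ac_simps flip: power_mult)
    ultimately have "\<gamma> ^ 24 = 1" by simp
    then show False using not_root by auto
  qed
  then have "3 \<le> norm (x^2 + x'^2)" unfolding sum2 by simp
  then have "3/2 \<le> norm (x^2) \<or> 3/2 \<le> norm (x'^2)"
    using norm_triangle_ineq[of "x^2" "x'^2"] by linarith
  moreover have "norm (x^2) ^ n = norm \<gamma> ^ 2"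
    by (simp add: norm_power ac_simps flip: pow(1) power_mult)
  moreover have "norm (x'^2) ^ n = norm (inverse \<gamma>) ^ 2"
    by (simp add: norm_power ac_simps flip: pow(2) power_mult)
  moreover have "(3/2) ^ n \<le> b ^ n" if "3/2 \<le> b" for b :: real
    using that by (intro power_mono) auto
  ultimately have "B \<le> norm \<gamma> ^ 2 \<or> B \<le> norm (inverse \<gamma>) ^ 2"
    unfolding B_def by metis
  moreover have "real n / 2 \<le> B"
    using Bernoulli_inequality[of "1/2 :: real" n] by (simp add: B_def)
  ultimately show ?thesis
    using zero_le_power2[of "norm \<gamma>"] zero_le_power2[of "norm (inverse \<gamma>)"] by (elim disjE) argo+
qed

lemma conjugate_power_exponent_bound:
  fixes x x' \<gamma> :: complex
  assumes unit: "x * x' = 1 \<or> x * x' = -1" and sum: "x + x' = of_rat t"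
    and pow: "x ^ n = \<gamma>" "x' ^ n = inverse \<gamma>" and trace: "\<gamma> + inverse \<gamma> = of_rat c"
    and not_root: "\<forall>k>0. \<gamma> ^ k \<noteq> 1" and "n > 0"
  shows "real n \<le> max (2 * (norm \<gamma> ^ 2 + norm (inverse \<gamma>) ^ 2)) (of_int (snd (quotient_of c)))"
proof (cases "snd (quotient_of t) = 1")
  case True
  then obtain p where "quotient_of t = (p, 1)" by (metis prod.collapse)
  then have "t = of_int p" using quotient_of_div[of t p 1] by simp
  then have "x + x' = of_int p" using sum by simp
  then show ?thesis
    using unit_power_exponent_bound[OF unit _ pow not_root] by simp
next
  case False
  define q where "q = snd (quotient_of t)"
  have "q \<ge> 2" using False quotient_of_denom_pos'[of t] unfolding q_def by linarith
  have "x ^ n + x' ^ n = of_rat c" using pow trace by simp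
  then have "q ^ n dvd snd (quotient_of c)"
    unfolding q_def using \<open>n > 0\<close> unit by (intro power_sum_denominator_dvd[OF sum, where N = "if x * x' = 1 then 1 else -1"]) auto
  then have "q ^ n \<le> snd (quotient_of c)"
    using quotient_of_denom_pos'[of c] by (intro zdvd_imp_le)
  moreover have "int n < 2 ^ n" by (metis less_exp of_nat_less_iff of_nat_numeral of_nat_power)
  moreover have "(2::int) ^ n \<le> q ^ n" using \<open>q \<ge> 2\<close> by (intro power_mono) auto
  ultimately have "int n \<le> snd (quotient_of c)" by linarith
  then show ?thesis by (simp add: le_max_iff_disj)
qed

lemma int_square_if_rat_square:
  fixes q :: rat and n :: int
  assumes "q ^ 2 = of_int n"
  shows "\<exists>k. n = k ^ 2"
proof -
  obtain a b where q: "quotient_of q = (a, b)" by (cases "quotient_of q")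
  have "b > 0" "coprime a b" using q by (simp_all add: quotient_of_denom_pos quotient_of_coprime)
  have "(of_int a / of_int b) ^ 2 = (of_int n :: rat)" using assms quotient_of_div[OF q] by simp
  then have "(of_int (a ^ 2) :: rat) = of_int (n * b ^ 2)"
    using \<open>b > 0\<close> by (simp add: field_simps power2_eq_square)
  then have a2: "a ^ 2 = n * b ^ 2" by (simp only: of_int_eq_iff)
  then have "b dvd a ^ 2" by simp
  moreover have "coprime b (a ^ 2)" using \<open>coprime a b\<close> by (simp add: coprime_commute)
  ultimately have "is_unit b" by (metis coprime_common_divisor dvd_refl)
  then have "b = 1" using \<open>b > 0\<close> by simp
  then show ?thesis using a2 by auto
qed

lemma csqrt_of_int_notin_Rats:
  assumes "\<not> (\<exists>k. D = k ^ 2)"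
  shows "csqrt (of_int D) \<notin> \<rat>"
proof
  assume "csqrt (of_int D) \<in> \<rat>"
  then obtain q where "csqrt (of_int D) = of_rat q" by (elim Rats_cases)
  then have "of_rat (q ^ 2) = (of_rat (of_int D) :: complex)"
    by (metis of_rat_power of_rat_of_int_eq power2_csqrt)
  then have "q ^ 2 = of_int D" by (simp only: of_rat_eq_iff)
  then show False using assms int_square_if_rat_square by blast
qed

definition quad_conjugates :: "complex \<Rightarrow> complex \<Rightarrow> complex \<Rightarrow> bool" where
  "quad_conjugates y z z' \<longleftrightarrow> (\<exists>r s. z = of_rat r + of_rat s * y \<and> z' = of_rat r - of_rat s * y)"

lemma quad_field_iff_quad_conjugates:
  "z \<in> quad_field D \<longleftrightarrow> (\<exists>z'. quad_conjugates (csqrt (of_int D)) z z')"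
  unfolding quad_field_def quad_conjugates_def by auto

lemma quad_conjugates_mult:
  assumes "y ^ 2 \<in> \<rat>" and "quad_conjugates y z z'" and "quad_conjugates y w w'"
  shows "quad_conjugates y (z * w) (z' * w')"
proof -
  obtain D where D: "y * y = of_rat D" using assms(1) by (auto simp: power2_eq_square elim: Rats_cases)
  obtain r s r' s' where z: "z = of_rat r + of_rat s * y" "z' = of_rat r - of_rat s * y"
    and w: "w = of_rat r' + of_rat s' * y" "w' = of_rat r' - of_rat s' * y"
    using assms(2,3) unfolding quad_conjugates_def by blast
  have "z * w = of_rat r * of_rat r' + of_rat s * of_rat s' * (y * y) + (of_rat r * of_rat s' + of_rat s * of_rat r') * y"
    "z' * w' = of_rat r * of_rat r' + of_rat s * of_rat s' * (y * y) - (of_rat r * of_rat s' + of_rat s * of_rat r') * y"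
    unfolding z w by (simp_all add: algebra_simps)
  then show ?thesis
    unfolding quad_conjugates_def D
    by (intro exI[of _ "r * r' + s * s' * D"] exI[of _ "r * s' + s * r'"]) (simp add: of_rat_add of_rat_mult)
qed

lemma quad_conjugates_power:
  assumes "y ^ 2 \<in> \<rat>" and "quad_conjugates y z z'"
  shows "quad_conjugates y (z ^ n) (z' ^ n)"
proof (induction n)
  case 0
  have "quad_conjugates y 1 1"
    unfolding quad_conjugates_def by (rule exI[of _ 1], rule exI[of _ 0]) simp
  then show ?case by simp
next
  case (Suc n)
  then show ?case using quad_conjugates_mult[OF assms] by simp
qed

lemma quad_conjugates_divide_rat:
  assumes "quad_conjugates y z z'"
  shows "quad_conjugates y (z / of_rat c) (z' / of_rat c)"
proof -
  obtain r s where "z = of_rat r + of_rat s * y" "z' = of_rat r - of_rat s * y"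
    using assms unfolding quad_conjugates_def by blast
  then show ?thesis
    unfolding quad_conjugates_def
    by (intro exI[of _ "r / c"] exI[of _ "s / c"]) (simp add: of_rat_divide add_divide_distrib diff_divide_distrib)
qed

lemma quad_conjugates_unique:
  assumes "y \<notin> \<rat>" and "quad_conjugates y z z1" and "quad_conjugates y z z2"
  shows "z1 = z2"
proof -
  obtain r1 s1 r2 s2 where z: "z = of_rat r1 + of_rat s1 * y" "z = of_rat r2 + of_rat s2 * y"
    and z12: "z1 = of_rat r1 - of_rat s1 * y" "z2 = of_rat r2 - of_rat s2 * y"
    using assms(2,3) unfolding quad_conjugates_def by blast
  have "s1 = s2"
  proof (rule ccontr)
    assume "s1 \<noteq> s2"
    have "of_rat (s1 - s2) * y = of_rat (r2 - r1)"
      using z by (simp add: of_rat_diff algebra_simps)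
    then have "y = of_rat ((r2 - r1) / (s1 - s2))"
      using \<open>s1 \<noteq> s2\<close> by (simp add: of_rat_divide eq_divide_eq mult.commute)
    with assms(1) show False by simp
  qed
  moreover have "z1 = z - 2 * of_rat s1 * y" unfolding z(1) z12(1) by (simp add: algebra_simps)
  moreover have "z2 = z - 2 * of_rat s2 * y" unfolding z(2) z12(2) by (simp add: algebra_simps)
  ultimately show ?thesis by simp
qed

lemma quad_conjugates_add_mult_Rats:
  assumes "y ^ 2 \<in> \<rat>" and "quad_conjugates y z z'"
  shows "z + z' \<in> \<rat>" and "z * z' \<in> \<rat>"
proof -
  obtain r s where z: "z = of_rat r + of_rat s * y" "z' = of_rat r - of_rat s * y"
    using assms(2) unfolding quad_conjugates_def by blast
  have "z + z' = of_rat (2 * r)" unfolding z by (simp add: of_rat_mult)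
  then show "z + z' \<in> \<rat>" by simp
  have "z * z' = of_rat r ^ 2 - of_rat s ^ 2 * y ^ 2"
    unfolding z by (simp add: power2_eq_square algebra_simps)
  then show "z * z' \<in> \<rat>" using assms(1) by (simp add: Rats_diff Rats_mult)
qed

lemma power_eq_1_imp_abs_eq_1:
  fixes x :: "'a :: linordered_idom"
  assumes "x ^ n = 1" and "n > 0"
  shows "\<bar>x\<bar> = 1"
proof -
  have "\<bar>x\<bar> ^ n = 1 ^ n" using assms(1) by (simp flip: power_abs)
  then show ?thesis by (rule power_eq_imp_eq_base) (use assms(2) in auto)
qed

lemma quad_field_root_exponent_bound:
  fixes D :: int and \<gamma> :: complex
  assumes nonsquare: "\<not> (\<exists>k. D = k ^ 2)"
    and conj: "quad_conjugates (csqrt (of_int D)) \<gamma> (inverse \<gamma>)" and "\<gamma> \<noteq> 0"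
    and not_root: "\<forall>k>0. \<gamma> ^ k \<noteq> 1"
  obtains N where "\<And>n x. x \<in> quad_field D \<Longrightarrow> x ^ n = \<gamma> \<Longrightarrow> n \<le> N"
proof -
  define y where "y = csqrt (of_int D)"
  have y2: "y ^ 2 \<in> \<rat>" by (simp add: y_def)
  have y: "y \<notin> \<rat>" unfolding y_def using nonsquare by (rule csqrt_of_int_notin_Rats)
  note conj = conj[folded y_def]
  obtain c where c: "\<gamma> + inverse \<gamma> = of_rat c"
    using quad_conjugates_add_mult_Rats(1)[OF y2 conj] by (elim Rats_cases)
  define M where "M = max (2 * (norm \<gamma> ^ 2 + norm (inverse \<gamma>) ^ 2)) (of_int (snd (quotient_of c)))"
  have "n \<le> nat \<lceil>M\<rceil>" if x: "x \<in> quad_field D" "x ^ n = \<gamma>" for n x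
  proof (cases "n = 0")
    case False
    from x obtain x' where x': "quad_conjugates y x x'"
      unfolding quad_field_iff_quad_conjugates y_def by blast
    have "quad_conjugates y \<gamma> (x' ^ n)"
      using quad_conjugates_power[OF y2 x', of n] x(2) by simp
    then have x'n: "x' ^ n = inverse \<gamma>"
      using quad_conjugates_unique[OF y _ conj] by blast
    obtain t where t: "x + x' = of_rat t"
      using quad_conjugates_add_mult_Rats(1)[OF y2 x'] by (elim Rats_cases)
    obtain \<nu> where \<nu>: "x * x' = of_rat \<nu>"
      using quad_conjugates_add_mult_Rats(2)[OF y2 x'] by (elim Rats_cases)
    have "of_rat (\<nu> ^ n) = (x * x') ^ n" by (simp add: \<nu> of_rat_power)
    also have "\<dots> = 1" using x(2) x'n \<open>\<gamma> \<noteq> 0\<close> by (simp add: power_mult_distrib)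
    finally have "\<nu> ^ n = 1" by simp
    then have "\<bar>\<nu>\<bar> = 1" using False by (intro power_eq_1_imp_abs_eq_1) auto
    then have "x * x' = 1 \<or> x * x' = -1"
      using \<nu> by (cases "\<nu> \<ge> 0") auto
    then have "real n \<le> M"
      unfolding M_def using conjugate_power_exponent_bound[OF _ t x(2) x'n c not_root] False by blast
    then show ?thesis by linarith
  qed simp
  then show thesis by (rule that)
qed

lemma greatest_root_exponent_pos:
  fixes D :: int and \<gamma> :: complex
  assumes "\<not> (\<exists>k. D = k ^ 2)"
    and conj: "quad_conjugates (csqrt (of_int D)) \<gamma> (inverse \<gamma>)" and "\<gamma> \<noteq> 0"
    and "\<forall>k>0. \<gamma> ^ k \<noteq> 1"
  shows "(GREATEST n. n > 0 \<and> (\<exists>x\<in>quad_field D. x ^ n = \<gamma>)) > 0"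
proof -
  obtain N where N: "\<And>n x. x \<in> quad_field D \<Longrightarrow> x ^ n = \<gamma> \<Longrightarrow> n \<le> N"
    using quad_field_root_exponent_bound[OF assms] by blast
  have "\<gamma> \<in> quad_field D" using conj unfolding quad_field_iff_quad_conjugates by blast
  then have "\<exists>x\<in>quad_field D. x ^ 1 = \<gamma>" by auto
  then show ?thesis
    using GreatestI_nat[of "\<lambda>n. n > 0 \<and> (\<exists>x\<in>quad_field D. x ^ n = \<gamma>)" 1 N] N by blast
qed

lemma root_ratio_quad_conjugates:
  fixes \<alpha> \<beta> :: complex and a1 a2 :: int
  assumes sum: "\<alpha> + \<beta> = of_int a1" and prod: "\<alpha> * \<beta> = - of_int a2" and "a2 \<noteq> 0"
  shows "quad_conjugates (csqrt (of_int (a1^2 + 4 * a2))) (\<alpha> / \<beta>) (inverse (\<alpha> / \<beta>))"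
proof -
  define y where "y = csqrt (of_int (a1^2 + 4 * a2))"
  have y2: "y ^ 2 \<in> \<rat>" by (simp add: y_def)
  have "(\<alpha> - \<beta>) ^ 2 = (\<alpha> + \<beta>) ^ 2 - 4 * (\<alpha> * \<beta>)" by (simp add: power2_eq_square algebra_simps)
  also have "\<dots> = y ^ 2" by (simp add: sum prod y_def)
  finally obtain e :: rat where e: "\<alpha> - \<beta> = of_rat e * y"
    by (metis power2_eq_iff mult_1 mult_minus1 of_rat_1 of_rat_minus)
  have "quad_conjugates y \<alpha> \<beta>"
  proof -
    have "\<alpha> = ((\<alpha> + \<beta>) + (\<alpha> - \<beta>)) / 2" "\<beta> = ((\<alpha> + \<beta>) - (\<alpha> - \<beta>)) / 2" by simp_all
    then show ?thesis
      unfolding quad_conjugates_def sum e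
      by (intro exI[of _ "of_int a1 / 2"] exI[of _ "e / 2"]) (simp add: of_rat_divide add_divide_distrib diff_divide_distrib)
  qed
  then have "quad_conjugates y (\<alpha>^2 / of_rat (of_int (- a2))) (\<beta>^2 / of_rat (of_int (- a2)))"
    by (intro quad_conjugates_divide_rat quad_conjugates_power[OF y2])
  moreover have "of_rat (of_int (- a2)) = \<alpha> * \<beta>" using prod by (simp only: of_rat_of_int_eq of_rat_minus of_int_minus)
  moreover have "\<alpha> \<noteq> 0" "\<beta> \<noteq> 0" using prod \<open>a2 \<noteq> 0\<close> by auto
  then have "\<alpha>^2 / (\<alpha> * \<beta>) = \<alpha> / \<beta>" "\<beta>^2 / (\<alpha> * \<beta>) = inverse (\<alpha> / \<beta>)"
    by (simp_all add: power2_eq_square field_simps)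
  ultimately show ?thesis unfolding y_def by simp
qed

section \<open>Euler products over smooth numbers\<close>

lemma has_sum_prod_PiE_nonneg:
  fixes f :: "'a \<Rightarrow> nat \<Rightarrow> real"
  assumes A: "finite A" and f: "\<And>x. x \<in> A \<Longrightarrow> (f x has_sum s x) UNIV"
    and nonneg: "\<And>x j. f x j \<ge> 0"
  shows "((\<lambda>g. \<Prod>x\<in>A. f x (g x)) has_sum (\<Prod>x\<in>A. s x)) (PiE A (\<lambda>_. UNIV))"
proof -
  have abs: "Infinite_Sum.abs_summable_on (f x) UNIV" if "x \<in> A" for x
    using f[OF that] nonneg by (auto simp: summable_on_def)
  have "Infinite_Set_Sum.abs_summable_on (f x) UNIV" if "x \<in> A" for x
    using abs[OF that] abs_summable_equivalent by blast
  then have "Infinite_Set_Sum.abs_summable_on (\<lambda>g. \<Prod>x\<in>A. f x (g x)) (PiE A (\<lambda>_. UNIV))"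
    by (intro abs_summable_on_prod_PiE[OF A]) auto
  then have "(\<lambda>g. \<Prod>x\<in>A. f x (g x)) summable_on (PiE A (\<lambda>_. UNIV))"
    by (simp add: abs_summable_summable flip: abs_summable_equivalent)
  moreover have "infsum (\<lambda>g. \<Prod>x\<in>A. f x (g x)) (PiE A (\<lambda>_. UNIV)) = (\<Prod>x\<in>A. infsum (f x) UNIV)"
    using A abs by (rule infsum_prod_PiE_abs)
  moreover have "(\<Prod>x\<in>A. infsum (f x) UNIV) = (\<Prod>x\<in>A. s x)"
    using f by (intro prod.cong) (auto intro: infsumI)
  ultimately show ?thesis by (metis has_sum_infsum)
qed

definition smooth_numbers :: "nat set \<Rightarrow> nat set" where
  "smooth_numbers P = {v. v > 0 \<and> prime_factors v \<subseteq> P}"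

lemma prod_multiplicity_smooth_number:
  assumes P: "finite P" "\<And>p. p \<in> P \<Longrightarrow> prime p" and v: "v \<in> smooth_numbers P"
  shows "(\<Prod>p\<in>P. p ^ multiplicity p v) = v"
proof -
  have "(\<Prod>p\<in>P. p ^ multiplicity p v) = (\<Prod>p\<in>prime_factors v. p ^ multiplicity p v)"
    using v P by (intro prod.mono_neutral_right)
      (auto simp: smooth_numbers_def prime_factors_multiplicity not_dvd_imp_multiplicity_0)
  also have "\<dots> = v" using v by (simp add: smooth_numbers_def flip: prime_factorization_nat)
  finally show ?thesis .
qed

lemma real_eq_prod_multiplicity_smooth_number:
  assumes "finite P" "\<And>p. p \<in> P \<Longrightarrow> prime p" and "v \<in> smooth_numbers P"
  shows "real v = (\<Prod>p\<in>P. real p ^ multiplicity p v)"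
proof -
  have "real v = real (\<Prod>p\<in>P. p ^ multiplicity p v)"
    by (simp only: prod_multiplicity_smooth_number[OF assms])
  also have "\<dots> = (\<Prod>p\<in>P. real p ^ multiplicity p v)" by simp
  finally show ?thesis .
qed

lemma has_sum_smooth_numbers_multiplicative:
  fixes f :: "nat \<Rightarrow> nat \<Rightarrow> real"
  assumes P: "finite P" "\<And>p. p \<in> P \<Longrightarrow> prime p"
    and f: "\<And>p. p \<in> P \<Longrightarrow> (f p has_sum s p) UNIV" and nonneg: "\<And>p j. f p j \<ge> 0"
  shows "((\<lambda>v. \<Prod>p\<in>P. f p (multiplicity p v)) has_sum (\<Prod>p\<in>P. s p)) (smooth_numbers P)"
proof -
  define E where "E g = (\<Prod>p\<in>P. p ^ g p)" for g :: "nat \<Rightarrow> nat"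
  have E_pos: "E g > 0" for g
    using P by (auto simp: E_def prime_gt_0_nat intro!: prod_pos)
  have E_mult: "multiplicity p (E g) = g p" if "p \<in> P" for p g
    using that P by (simp add: E_def multiplicity_prod_prime_powers)
  have "bij_betw E (PiE P (\<lambda>_. UNIV)) (smooth_numbers P)"
  proof (rule bij_betwI[where g = "\<lambda>v. restrict (\<lambda>p. multiplicity p v) P"])
    have "prime_factors (E g) \<subseteq> P" for g
    proof
      fix q assume "q \<in> prime_factors (E g)"
      then have "prime q" "multiplicity q (E g) > 0"
        using E_pos[of g] by (auto simp: prime_factors_multiplicity)
      then show "q \<in> P" using P by (auto simp: E_def multiplicity_prod_prime_powers split: if_splits)
    qed
    then show "E \<in> PiE P (\<lambda>_. UNIV) \<rightarrow> smooth_numbers P"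
      using E_pos by (auto simp: smooth_numbers_def)
    show "restrict (\<lambda>p. multiplicity p (E g)) P = g" if "g \<in> PiE P (\<lambda>_. UNIV)" for g
      using that E_mult by (auto simp: PiE_def extensional_def)
    show "E (restrict (\<lambda>p. multiplicity p v) P) = v" if "v \<in> smooth_numbers P" for v
      using prod_multiplicity_smooth_number[OF P that] by (simp add: E_def)
  qed auto
  moreover have "((\<lambda>g. \<Prod>p\<in>P. f p (multiplicity p (E g))) has_sum (\<Prod>p\<in>P. s p)) (PiE P (\<lambda>_. UNIV))"
    using has_sum_prod_PiE_nonneg[OF P(1) f nonneg] by (rule has_sum_cong[THEN iffD1, rotated]) (auto simp: E_mult intro: prod.cong)
  ultimately show ?thesis
    using has_sum_reindex_bij_betw by blast
qed

lemma gcd_div_eq_prod: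
  assumes P: "finite P" "\<And>p. p \<in> P \<Longrightarrow> prime p" and m: "m \<in> smooth_numbers P" and "h > 0"
  shows "real (gcd m h) / real m =
         (\<Prod>p\<in>P. real p ^ min (multiplicity p m) (multiplicity p h) / real p ^ multiplicity p m)"
proof -
  have "m > 0" using m by (simp add: smooth_numbers_def)
  have "gcd m h \<in> smooth_numbers P"
    using m \<open>m > 0\<close> by (auto simp: smooth_numbers_def in_prime_factors_iff intro: dvd_trans)
  then have "real (gcd m h) = (\<Prod>p\<in>P. real p ^ multiplicity p (gcd m h))"
    using real_eq_prod_multiplicity_smooth_number[OF P] by blast
  also have "\<dots> = (\<Prod>p\<in>P. real p ^ min (multiplicity p m) (multiplicity p h))"
    using P \<open>m > 0\<close> \<open>h > 0\<close> by (intro prod.cong) (simp_all add: multiplicity_gcd)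
  finally show ?thesis
    by (simp add: real_eq_prod_multiplicity_smooth_number[OF P m] prod_dividef)
qed

lemma totient_mult_smooth_number:
  assumes "d > 0" and "v \<in> smooth_numbers (prime_factors d)"
  shows "real (totient (d * v)) =
         (\<Prod>p\<in>prime_factors d. real p ^ multiplicity p d * real p ^ multiplicity p v * (1 - 1 / real p))"
proof -
  let ?P = "prime_factors d"
  have P: "finite ?P" "\<And>p. p \<in> ?P \<Longrightarrow> prime p" by auto
  have "d \<in> smooth_numbers ?P" using \<open>d > 0\<close> by (simp add: smooth_numbers_def)
  have "v > 0" "prime_factors v \<subseteq> ?P" using assms(2) by (auto simp: smooth_numbers_def)
  then have "prime_factors (d * v) = ?P" using \<open>d > 0\<close> by (auto simp: prime_factors_product)
  then have "real (totient (d * v)) = real d * real v * (\<Prod>p\<in>?P. 1 - 1 / real p)"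
    by (simp add: totient_formula2)
  then show ?thesis
    by (simp add: real_eq_prod_multiplicity_smooth_number[OF P \<open>d \<in> smooth_numbers ?P\<close>]
        real_eq_prod_multiplicity_smooth_number[OF P assms(2)] prod.distrib)
qed

lemma dinf_gcd_eq_prod:
  assumes "d > 0" "h > 0"
  shows "dinf_gcd d h = (\<Prod>p\<in>prime_factors d. p ^ multiplicity p h)"
proof -
  let ?P = "prime_factors d"
  let ?H = "\<Prod>p\<in>?P. p ^ multiplicity p h"
  have P: "finite ?P" "\<And>p. p \<in> ?P \<Longrightarrow> prime p" by auto
  have "?H > 0" by (intro prod_pos) (simp add: prime_factors_gt_0_nat)
  have mult_H: "multiplicity q ?H = (if q \<in> ?P then multiplicity q h else 0)" if "prime q" for q
    using multiplicity_prod_prime_powers[OF P that, of "\<lambda>p. multiplicity p h"] by simp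
  have "?H dvd h"
    using \<open>?H > 0\<close> \<open>h > 0\<close> mult_H by (intro multiplicity_le_imp_dvd) auto
  moreover have "p dvd d" if "prime p" "p dvd ?H" for p
    using that \<open>?H > 0\<close> mult_H[of p] \<open>d > 0\<close>
    by (auto simp: prime_multiplicity_gt_zero_iff[symmetric] in_prime_factors_iff split: if_splits)
  moreover have "g \<le> ?H" if "g dvd h" "\<forall>p. prime p \<and> p dvd g \<longrightarrow> p dvd d" for g
  proof -
    have "g > 0" using that(1) \<open>h > 0\<close> by (intro Nat.gr0I) simp
    have "multiplicity q g \<le> multiplicity q ?H" if "prime q" for q
    proof (cases "q \<in> ?P")
      case True
      then show ?thesis using mult_H[OF \<open>prime q\<close>] \<open>g dvd h\<close> \<open>h > 0\<close> by (simp add: dvd_imp_multiplicity_le)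
    next
      case False
      then have "\<not> q dvd g" using \<open>prime q\<close> \<open>d > 0\<close> \<open>\<forall>p. prime p \<and> p dvd g \<longrightarrow> p dvd d\<close>
        by (auto simp: in_prime_factors_iff)
      then show ?thesis by (simp add: not_dvd_imp_multiplicity_0)
    qed
    then have "g dvd ?H" using \<open>g > 0\<close> by (intro multiplicity_le_imp_dvd) auto
    then show ?thesis using \<open>?H > 0\<close> by (rule dvd_imp_le)
  qed
  ultimately show ?thesis
    unfolding dinf_gcd_def by (intro Greatest_equality) auto
qed

section \<open>Moebius sums over divisors\<close>

lemma prime_factors_prod_primes:
  assumes "finite T" "\<And>p. p \<in> T \<Longrightarrow> prime (p :: nat)"
  shows "prime_factors (\<Prod>T) = T"
proof -
  have "0 \<notin> (\<lambda>p. p) ` T" using assms(2) not_prime_0 by blast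
  then have "prime_factors (\<Prod>T) = (\<Union>p\<in>T. prime_factors p)"
    using assms(1) by (simp add: prime_factors_prod o_def)
  also have "\<dots> = T" using assms by (simp add: prime_prime_factors)
  finally show ?thesis .
qed

lemma squarefree_prod_primes:
  assumes "finite T" "\<And>p. p \<in> T \<Longrightarrow> prime (p :: nat)"
  shows "squarefree (\<Prod>T)"
  using assms by (intro squarefree_prod_coprime) (auto intro: primes_coprime squarefree_prime)

lemma prod_prime_factors_squarefree:
  assumes "squarefree (a :: nat)"
  shows "\<Prod>(prime_factors a) = a"
proof -
  have "a > 0" using assms by (intro Nat.gr0I) simp
  have "a = (\<Prod>p\<in>prime_factors a. p ^ multiplicity p a)"
    using \<open>a > 0\<close> by (rule prime_factorization_nat)
  also have "\<dots> = \<Prod>(prime_factors a)"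
    using assms \<open>a > 0\<close> by (intro prod.cong) (auto simp: squarefree_factorial_semiring')
  finally show ?thesis by simp
qed

lemma sum_moebius_eq_sum_subsets:
  fixes X :: "nat \<Rightarrow> real"
  assumes "d > 0"
  shows "(\<Sum>a | a dvd d. of_int (moebius_mu a) * X a) = (\<Sum>T\<in>Pow (prime_factors d). (-1) ^ card T * X (\<Prod>T))"
proof -
  let ?P = "prime_factors d"
  have T: "finite T" "\<And>p. p \<in> T \<Longrightarrow> prime p" if "T \<in> Pow ?P" for T
    using that by (auto intro: finite_subset)
  have "\<Prod>?P dvd (\<Prod>p\<in>?P. p ^ multiplicity p d)"
    by (intro prod_dvd_prod dvd_power) (auto simp: prime_factors_multiplicity)
  then have rad_dvd: "\<Prod>?P dvd d" using \<open>d > 0\<close> by (simp flip: prime_factorization_nat)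
  have "(\<Sum>a | a dvd d. of_int (moebius_mu a) * X a) = (\<Sum>a | a dvd d \<and> squarefree a. of_int (moebius_mu a) * X a)"
    using \<open>d > 0\<close> by (intro sum.mono_neutral_right) (auto simp: moebius_mu_def finite_divisors_nat)
  also have "\<dots> = (\<Sum>T\<in>Pow ?P. of_int (moebius_mu (\<Prod>T)) * X (\<Prod>T))"
  proof (rule sum.reindex_bij_betw[symmetric], rule bij_betwI[where g = prime_factors])
    show "Prod \<in> Pow ?P \<rightarrow> {a. a dvd d \<and> squarefree a}"
      using T rad_dvd by (auto intro: squarefree_prod_primes dvd_trans[OF prod_dvd_prod_subset])
    show "prime_factors \<in> {a. a dvd d \<and> squarefree a} \<rightarrow> Pow ?P"
      using \<open>d > 0\<close> by (auto simp: in_prime_factors_iff intro: dvd_trans)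
  qed (use T prime_factors_prod_primes prod_prime_factors_squarefree in auto)
  also have "\<dots> = (\<Sum>T\<in>Pow ?P. (-1) ^ card T * X (\<Prod>T))"
    using T by (intro sum.cong) (auto simp: moebius_mu_def prime_factors_prod_primes squarefree_prod_primes prime_gt_0_nat intro!: prod_pos)
  finally show ?thesis .
qed

lemma sum_subsets_prod_diff:
  fixes G :: "'a \<Rightarrow> nat \<Rightarrow> real"
  assumes "finite P"
  shows "(\<Sum>T\<in>Pow P. (-1) ^ card T * (\<Prod>p\<in>P. G p (m p + (if p \<in> T then 1 else 0)))) =
         (\<Prod>p\<in>P. G p (m p) - G p (Suc (m p)))"
proof -
  have "(\<Prod>p\<in>P. G p (m p) - G p (Suc (m p))) = (\<Prod>p\<in>P. - G p (Suc (m p)) + G p (m p))" by simp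
  also have "\<dots> = (\<Sum>T\<in>Pow P. (\<Prod>p\<in>T. - G p (Suc (m p))) * (\<Prod>p\<in>P - T. G p (m p)))"
    by (rule prod_add[OF assms])
  also have "\<dots> = (\<Sum>T\<in>Pow P. (-1) ^ card T * (\<Prod>p\<in>P. G p (m p + (if p \<in> T then 1 else 0))))"
  proof (rule sum.cong[OF refl])
    fix T assume "T \<in> Pow P"
    then have "T \<subseteq> P" by simp
    have "(\<Prod>p\<in>P. G p (m p + (if p \<in> T then 1 else 0))) =
          (\<Prod>p\<in>P - T. G p (m p + (if p \<in> T then 1 else 0))) * (\<Prod>p\<in>T. G p (m p + (if p \<in> T then 1 else 0)))"
      by (rule prod.subset_diff[OF \<open>T \<subseteq> P\<close> assms])
    also have "\<dots> = (\<Prod>p\<in>P - T. G p (m p)) * (\<Prod>p\<in>T. G p (Suc (m p)))"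
      by (intro arg_cong2[where f = "(*)"] prod.cong) auto
    finally have "(\<Prod>p\<in>P. G p (m p + (if p \<in> T then 1 else 0))) = (\<Prod>p\<in>P - T. G p (m p)) * (\<Prod>p\<in>T. G p (Suc (m p)))" .
    moreover have "(\<Prod>p\<in>T. - G p (Suc (m p))) = (-1) ^ card T * (\<Prod>p\<in>T. G p (Suc (m p)))"
      by (rule prod_uminus)
    ultimately show "(\<Prod>p\<in>T. - G p (Suc (m p))) * (\<Prod>p\<in>P - T. G p (m p)) =
          (-1) ^ card T * (\<Prod>p\<in>P. G p (m p + (if p \<in> T then 1 else 0)))" by simp
  qed
  finally show ?thesis by simp
qed

lemma sum_moebius_prod_multiplicity:
  fixes G :: "nat \<Rightarrow> nat \<Rightarrow> real"
  assumes "d > 0" and "v > 0"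
  shows "(\<Sum>a | a dvd d. of_int (moebius_mu a) * (\<Prod>p\<in>prime_factors d. G p (multiplicity p (a * v)))) =
         (\<Prod>p\<in>prime_factors d. G p (multiplicity p v) - G p (Suc (multiplicity p v)))"
proof -
  let ?P = "prime_factors d"
  have "multiplicity p (\<Prod>T * v) = multiplicity p v + (if p \<in> T then 1 else 0)"
    if "T \<in> Pow ?P" "p \<in> ?P" for T p
  proof -
    have T: "finite T" "\<And>q. q \<in> T \<Longrightarrow> prime q" using that(1) by (auto intro: finite_subset)
    have "prime p" using that(2) by auto
    have "\<Prod>T > 0" using T by (auto simp: prime_gt_0_nat intro!: prod_pos)
    then have "multiplicity p (\<Prod>T * v) = multiplicity p (\<Prod>T) + multiplicity p v"
      using \<open>prime p\<close> \<open>v > 0\<close> by (intro prime_elem_multiplicity_mult_distrib) auto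
    then show ?thesis
      using multiplicity_prod_prime_powers[OF T \<open>prime p\<close>, of "\<lambda>_. 1"] by simp
  qed
  then have "(\<Sum>a | a dvd d. of_int (moebius_mu a) * (\<Prod>p\<in>?P. G p (multiplicity p (a * v)))) =
             (\<Sum>T\<in>Pow ?P. (-1) ^ card T * (\<Prod>p\<in>?P. G p (multiplicity p v + (if p \<in> T then 1 else 0))))"
    unfolding sum_moebius_eq_sum_subsets[OF \<open>d > 0\<close>] by (intro sum.cong refl arg_cong2[where f = "(*)"] prod.cong) auto
  also have "\<dots> = (\<Prod>p\<in>?P. G p (multiplicity p v) - G p (Suc (multiplicity p v)))"
    by (rule sum_subsets_prod_diff) simp
  finally show ?thesis .
qed

section \<open>The density sum\<close>

(* The factor at p of the summand for v, where e, k and j are the exponents of p in d, h and v. *)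
definition local_summand :: "nat \<Rightarrow> nat \<Rightarrow> nat \<Rightarrow> nat \<Rightarrow> real" where
  "local_summand p e k j = (if k \<le> j then real p ^ k / (real p ^ e * real p ^ (2 * j)) else 0)"

lemma local_summand_eq:
  assumes "prime p"
  shows "(real p ^ min j k / real p ^ j - real p ^ min (Suc j) k / real p ^ Suc j) /
           (real p ^ e * real p ^ j * (1 - 1 / real p)) = local_summand p e k j"
proof -
  have "real p > 1" using prime_gt_1_nat[OF assms] by simp
  show ?thesis
  proof (cases "k \<le> j")
    case True
    have "real p ^ k / real p ^ j - real p ^ k / real p ^ Suc j = real p ^ k / real p ^ j * (1 - 1 / real p)"
      by (simp add: right_diff_distrib)
    moreover have "real p ^ (2 * j) = real p ^ j * real p ^ j" by (simp add: mult_2 power_add)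
    ultimately show ?thesis
      using True \<open>real p > 1\<close> by (simp add: local_summand_def min_absorb2 field_simps)
  qed (use \<open>real p > 1\<close> in \<open>simp add: local_summand_def\<close>)
qed

lemma has_sum_local_summand:
  assumes "prime p"
  shows "(local_summand p e k has_sum inverse (real p ^ e * real p ^ k) * inverse (1 - 1 / real p ^ 2)) UNIV"
proof -
  define x :: real where "x = 1 / real p ^ 2"
  define c where "c = real p ^ k / real p ^ e * x ^ k"
  have "real p > 1" using prime_gt_1_nat[OF assms] by simp
  then have x: "norm x < 1" by (simp add: x_def)
  have "x ^ k = 1 / (real p ^ k * real p ^ k)"
    by (simp add: x_def power_one_over power2_eq_square power_mult_distrib)
  then have limit: "c * (1 / (1 - x)) = inverse (real p ^ e * real p ^ k) * inverse (1 - 1 / real p ^ 2)"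
    using \<open>real p > 1\<close> by (simp add: c_def x_def divide_inverse)
  have "((\<lambda>i. x ^ i) has_sum (1 / (1 - x))) UNIV"
    using x by (intro norm_summable_imp_has_sum) (simp_all add: power_abs summable_geometric geometric_sums)
  then have "((\<lambda>i. c * x ^ i) has_sum (c * (1 / (1 - x)))) UNIV"
    by (rule has_sum_cmult_right)
  moreover have "((\<lambda>i. c * x ^ i) has_sum (c * (1 / (1 - x)))) UNIV \<longleftrightarrow>
      ((\<lambda>j. real p ^ k / real p ^ e * x ^ j) has_sum (c * (1 / (1 - x)))) {k..}"
    by (rule has_sum_reindex_bij_witness[of _ "\<lambda>j. j - k" "\<lambda>i. i + k"]) (auto simp: c_def power_add)
  moreover have "((\<lambda>j. real p ^ k / real p ^ e * x ^ j) has_sum (c * (1 / (1 - x)))) {k..} \<longleftrightarrow>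
      (local_summand p e k has_sum (c * (1 / (1 - x)))) UNIV"
    by (intro has_sum_cong_neutral) (auto simp: local_summand_def x_def power_mult power_one_over)
  ultimately show ?thesis unfolding limit by simp
qed

lemma moebius_gcd_summand_eq_prod:
  assumes "d > 0" "h > 0" and v: "v \<in> smooth_numbers (prime_factors d)"
  shows "(\<Sum>a | a dvd d. of_int (moebius_mu a) * (real (gcd (a * v) h) / (real (totient (d * v)) * real (a * v))))
       = (\<Prod>p\<in>prime_factors d. local_summand p (multiplicity p d) (multiplicity p h) (multiplicity p v))"
proof -
  let ?P = "prime_factors d"
  let ?g = "\<lambda>p j. real p ^ min j (multiplicity p h) / real p ^ j"
  have P: "finite ?P" "\<And>p. p \<in> ?P \<Longrightarrow> prime p" by auto
  have "v > 0" using v by (simp add: smooth_numbers_def)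
  have "a * v \<in> smooth_numbers ?P" if "a dvd d" for a
  proof -
    have "a > 0" using that \<open>d > 0\<close> by (intro Nat.gr0I) simp
    then show ?thesis using that v \<open>d > 0\<close>
      by (auto simp: smooth_numbers_def prime_factors_product in_prime_factors_iff intro: dvd_trans)
  qed
  then have gcd: "real (gcd (a * v) h) / real (a * v) = (\<Prod>p\<in>?P. ?g p (multiplicity p (a * v)))" if "a dvd d" for a
    using that gcd_div_eq_prod[OF P _ \<open>h > 0\<close>] by blast
  have "(\<Sum>a | a dvd d. of_int (moebius_mu a) * (real (gcd (a * v) h) / (real (totient (d * v)) * real (a * v))))
      = (\<Sum>a | a dvd d. of_int (moebius_mu a) * (real (gcd (a * v) h) / real (a * v))) / real (totient (d * v))"
    by (simp add: sum_divide_distrib ac_simps)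
  also have "\<dots> = (\<Sum>a | a dvd d. of_int (moebius_mu a) * (\<Prod>p\<in>?P. ?g p (multiplicity p (a * v)))) / real (totient (d * v))"
    by (intro arg_cong2[where f = "(/)"] sum.cong refl) (simp only: gcd mem_Collect_eq)
  also have "\<dots> = (\<Prod>p\<in>?P. ?g p (multiplicity p v) - ?g p (Suc (multiplicity p v))) / real (totient (d * v))"
    using sum_moebius_prod_multiplicity[OF \<open>d > 0\<close> \<open>v > 0\<close>, of ?g] by simp
  also have "\<dots> = (\<Prod>p\<in>?P. (?g p (multiplicity p v) - ?g p (Suc (multiplicity p v))) /
      (real p ^ multiplicity p d * real p ^ multiplicity p v * (1 - 1 / real p)))"
    by (simp add: totient_mult_smooth_number[OF \<open>d > 0\<close> v] prod_dividef)
  also have "\<dots> = (\<Prod>p\<in>?P. local_summand p (multiplicity p d) (multiplicity p h) (multiplicity p v))"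
    using P(2) by (intro prod.cong refl local_summand_eq) (simp add: min.commute)
  finally show ?thesis .
qed

lemma has_sum_moebius_gcd_summand:
  assumes "d > 0" "h > 0"
  shows "((\<lambda>v. \<Sum>a | a dvd d. of_int (moebius_mu a) * (real (gcd (a * v) h) / (real (totient (d * v)) * real (a * v))))
           has_sum (1 / real d * (1 / real (dinf_gcd d h)) * (\<Prod>p\<in>prime_factors d. inverse (1 - 1 / real p ^ 2))))
         (smooth_numbers (prime_factors d))"
proof -
  let ?P = "prime_factors d"
  have P: "finite ?P" "\<And>p. p \<in> ?P \<Longrightarrow> prime p" by auto
  have "d \<in> smooth_numbers ?P" using \<open>d > 0\<close> by (simp add: smooth_numbers_def)
  have "((\<lambda>v. \<Prod>p\<in>?P. local_summand p (multiplicity p d) (multiplicity p h) (multiplicity p v))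
          has_sum (\<Prod>p\<in>?P. inverse (real p ^ multiplicity p d * real p ^ multiplicity p h) * inverse (1 - 1 / real p ^ 2)))
        (smooth_numbers ?P)"
    using P by (intro has_sum_smooth_numbers_multiplicative has_sum_local_summand) (auto simp: local_summand_def)
  moreover have "(\<Prod>p\<in>?P. inverse (real p ^ multiplicity p d * real p ^ multiplicity p h) * inverse (1 - 1 / real p ^ 2)) =
      1 / real d * (1 / real (dinf_gcd d h)) * (\<Prod>p\<in>?P. inverse (1 - 1 / real p ^ 2))"
    by (simp add: real_eq_prod_multiplicity_smooth_number[OF P \<open>d \<in> smooth_numbers ?P\<close>]
        dinf_gcd_eq_prod[OF assms] prod.distrib prod_inversef[unfolded o_def] divide_inverse)
  ultimately have "((\<lambda>v. \<Prod>p\<in>?P. local_summand p (multiplicity p d) (multiplicity p h) (multiplicity p v))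
      has_sum (1 / real d * (1 / real (dinf_gcd d h)) * (\<Prod>p\<in>?P. inverse (1 - 1 / real p ^ 2)))) (smooth_numbers ?P)"
    by simp
  then show ?thesis
    by (rule has_sum_cong[THEN iffD1, rotated]) (rule moebius_gcd_summand_eq_prod[OF assms, symmetric])
qed

lemma squarefree_dvd_iff_prime_dvd:
  fixes D :: int and n :: nat
  assumes "squarefree D" and "n > 0"
  shows "D dvd int n \<longleftrightarrow> (\<forall>p::nat. prime p \<and> int p dvd D \<longrightarrow> p dvd n)"
proof
  assume "D dvd int n"
  then show "\<forall>p::nat. prime p \<and> int p dvd D \<longrightarrow> p dvd n"
    by (auto dest: dvd_trans simp flip: of_nat_dvd_iff)
next
  assume H: "\<forall>p::nat. prime p \<and> int p dvd D \<longrightarrow> p dvd n"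
  have "D \<noteq> 0" using assms(1) by auto
  show "D dvd int n"
  proof (rule multiplicity_le_imp_dvd[OF \<open>D \<noteq> 0\<close>])
    fix q :: int assume "prime q"
    show "multiplicity q D \<le> multiplicity q (int n)"
    proof (cases "q dvd D")
      case True
      have "int (nat q) = q" using prime_gt_0_int[OF \<open>prime q\<close>] by simp
      then have "nat q dvd n" using H True \<open>prime q\<close> by (metis prime_nat_iff_prime)
      then have "q dvd int n" using \<open>int (nat q) = q\<close> by (metis of_nat_dvd_iff)
      then have "multiplicity q (int n) \<ge> 1"
        using \<open>prime q\<close> \<open>n > 0\<close> prime_multiplicity_gt_zero_iff[of q "int n"] by auto
      moreover have "multiplicity q D \<le> 1"
        using assms(1) \<open>D \<noteq> 0\<close> \<open>prime q\<close> by (simp add: squarefree_factorial_semiring'')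
      ultimately show ?thesis by linarith
    qed (simp add: not_dvd_imp_multiplicity_0)
  qed
qed

lemma squarefree_dvd_mult_smooth_iff:
  fixes D0 :: int
  assumes "squarefree D0" and "d > 0" and v: "v \<in> smooth_numbers (prime_factors d)"
  shows "D0 dvd int (d * v) \<longleftrightarrow> (\<forall>p::nat. prime p \<and> int p dvd D0 \<longrightarrow> p dvd d)"
proof -
  have dvd_iff: "p dvd d * v \<longleftrightarrow> p dvd d" if "prime p" for p :: nat
    using \<open>prime p\<close> v \<open>d > 0\<close> by (auto simp: smooth_numbers_def prime_dvd_mult_iff in_prime_factors_iff)
  have "d * v > 0" using v \<open>d > 0\<close> by (simp add: smooth_numbers_def)
  then have "D0 dvd int (d * v) \<longleftrightarrow> (\<forall>p::nat. prime p \<and> int p dvd D0 \<longrightarrow> p dvd d * v)"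
    by (rule squarefree_dvd_iff_prime_dvd[OF assms(1)])
  then show ?thesis using dvd_iff by blast
qed

lemma etaU_eq:
  assumes "squarefree D0" and "d > 0" and "h > 0"
  shows "etaU D D0 h d =
    (if D > 0 \<or> D0 mod 4 \<noteq> 1 \<or> \<not> (\<forall>p::nat. prime p \<and> int p dvd D0 \<longrightarrow> p dvd d) then 0
     else 1 / real (dinf_gcd d h))"
proof (cases "D > 0 \<or> D0 mod 4 \<noteq> 1 \<or> \<not> (\<forall>p::nat. prime p \<and> int p dvd D0 \<longrightarrow> p dvd d)")
  case False
  let ?H = "dinf_gcd d h"
  have "?H > 0" using assms(2,3) by (simp add: dinf_gcd_eq_prod prime_factors_gt_0_nat prod_pos)
  have "D0 \<noteq> 0" using assms(1) by auto
  have "D0 dvd int d" using False squarefree_dvd_iff_prime_dvd[OF assms(1,2)] by simp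
  then have "gcd (int d) D0 = \<bar>D0\<bar>" by (simp add: gcd_proj2_iff)
  moreover have "D0 div \<bar>D0\<bar> = sgn D0"
    using \<open>D0 \<noteq> 0\<close> by (metis abs_eq_0 nonzero_mult_div_cancel_right sgn_mult_abs)
  ultimately have "lcm (int ?H) (D0 div gcd (int d) D0) = int ?H"
    using \<open>D0 \<noteq> 0\<close> by (auto simp: sgn_if)
  then show ?thesis using False \<open>?H > 0\<close> by (simp add: etaU_def power2_eq_square)
qed (simp add: etaU_def)

lemma has_sum_deltaU:
  fixes D D0 :: int and h d :: nat
  assumes "squarefree D0" and "d > 0" and "h > 0"
  shows "((\<lambda>v. \<Sum>a | a dvd d. of_int (moebius_mu a) * deltaU D D0 h (d * v) (a * v))
           has_sum deltaU_d D D0 h d) (smooth_numbers (prime_factors d))"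
proof -
  let ?single = "D > 0 \<or> D0 mod 4 \<noteq> 1 \<or> \<not> (\<forall>p::nat. prime p \<and> int p dvd D0 \<longrightarrow> p dvd d)"
  define C :: real where "C = (if ?single then 1 else 2)"
  let ?S = "\<lambda>v. \<Sum>a | a dvd d. of_int (moebius_mu a) * (real (gcd (a * v) h) / (real (totient (d * v)) * real (a * v)))"
  let ?s = "1 / real d * (1 / real (dinf_gcd d h)) * (\<Prod>p\<in>prime_factors d. inverse (1 - 1 / real p ^ 2))"
  have summand: "(\<Sum>a | a dvd d. of_int (moebius_mu a) * deltaU D D0 h (d * v) (a * v)) = C * ?S v"
    if "v \<in> smooth_numbers (prime_factors d)" for v
    using squarefree_dvd_mult_smooth_iff[OF assms(1,2) that]
    by (auto simp: sum_distrib_left deltaU_def C_def intro!: sum.cong)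
  have "dinf_gcd d h > 0" using assms(2,3) by (simp add: dinf_gcd_eq_prod prime_factors_gt_0_nat prod_pos)
  then have total: "deltaU_d D D0 h d = C * ?s"
    using etaU_eq[OF assms, of D] \<open>d > 0\<close> by (cases ?single) (auto simp: deltaU_d_def C_def)
  have "((\<lambda>v. C * ?S v) has_sum C * ?s) (smooth_numbers (prime_factors d))"
    by (rule has_sum_cmult_right[OF has_sum_moebius_gcd_summand[OF assms(2,3)]])
  then show ?thesis
    unfolding total by (rule has_sum_cong[THEN iffD1, rotated]) (simp add: summand)
qed

theorem lemma6p4:
  fixes a1 a2 :: int and \<alpha> \<beta> :: complex and \<Delta> \<Delta>0 :: int and h d :: nat
  assumes "a1 \<noteq> 0" and "a2 \<noteq> 0"
    and roots: "\<alpha> + \<beta> = of_int a1" "\<alpha> * \<beta> = - of_int a2"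
    and not_root_of_unity: "\<forall>n::nat. n > 0 \<longrightarrow> (\<alpha> / \<beta>) ^ n \<noteq> 1"
    and Delta: "\<Delta> = a1^2 + 4 * a2"
    and Delta_nonsq: "\<not> (\<exists>k::int. \<Delta> = k^2)"
    and Delta0: "squarefree \<Delta>0" "\<exists>k::int. \<Delta> = \<Delta>0 * k^2"
    and h_def: "h = (GREATEST n::nat. n > 0 \<and> (\<exists>x\<in>quad_field \<Delta>. x ^ n = \<alpha> / \<beta>))"
    and d: "d > 0" "odd d" "\<Delta>0 = -3 \<longrightarrow> \<not> 3 dvd d"
  shows "((\<lambda>v. \<Sum>a | a dvd d. real_of_int (moebius_mu a) * deltaU \<Delta> \<Delta>0 h (d * v) (a * v))
           has_sum deltaU_d \<Delta> \<Delta>0 h d)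
         {v::nat. v > 0 \<and> (\<forall>p. prime p \<and> p dvd v \<longrightarrow> p dvd d)}"
proof -
  have "\<alpha> / \<beta> \<noteq> 0" using roots(2) \<open>a2 \<noteq> 0\<close> by auto
  moreover have "quad_conjugates (csqrt (of_int \<Delta>)) (\<alpha> / \<beta>) (inverse (\<alpha> / \<beta>))"
    unfolding Delta using roots \<open>a2 \<noteq> 0\<close> by (rule root_ratio_quad_conjugates)
  ultimately have "h > 0"
    unfolding h_def using Delta_nonsq not_root_of_unity by (intro greatest_root_exponent_pos) auto
  moreover have "{v. v > 0 \<and> (\<forall>p. prime p \<and> p dvd v \<longrightarrow> p dvd d)} = smooth_numbers (prime_factors d)"
    using d(1) by (auto simp: smooth_numbers_def in_prime_factors_iff)
  ultimately show ?thesis using has_sum_deltaU[OF Delta0(1) d(1)] by simp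
qed

end
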